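(* Consider any instance of the rescheduling problem $(1, h_1 \mid \Delta_{\max}\le k \mid \mu\Delta_{\max} + \sum_{j=1}^n w_j C_j)$ described in the context, and suppose it admits at least one feasible schedule. Then there exists an optimal schedule $\sigma^*$ such that: (a) $C_j(\sigma^* )\le C_j(\pi^* )$ for each job $J_j$ in the earlier schedule; (b) the earlier schedule contains at most one idle period; (c) each job in the earlier schedule that is processed after the idle period is processed exactly $\Delta_{\max}(\sigma^* )$ time units earlier than in $\pi^*$, i.e. $C_j(\pi^* )-C_j(\sigma^* )=\Delta_{\max}(\sigma^* )$; (d) the jobs in the earlier schedule processed after the idle period have consecutive indices $J_i,J_{i+1},\dots,J_{i+m}$; (e) the job $J_j$ of the earlier schedule processed immediately after the idle period satisfies $S_j(\pi^* )\ge T_2$; (f) the machine does not idle in the later schedule; (g) the first job in the later schedule has the maximum time deviation $\Delta_j$ among all jobs in the later schedule.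
   Context: An instance consists of $n$ jobs $J_1,\dots,J_n$, where $J_j$ has a positive integer processing time $p_j$ and a positive integer weight $w_j$, indexed in WSPT order $p_1/w_1\le\cdots\le p_n/w_n$; integers $T_1,T_2$ with $0\le T_1<T_2$ (machine unavailable during $[T_1,T_2]$); an integer $k$; a rational $\mu\ge 0$. The original schedule $\pi^*$ processes $J_1,\dots,J_n$ in order consecutively from time $0$ without idle time, so $S_j(\pi^* )=\sum_{i<j}p_i$, $C_j(\pi^* )=\sum_{i\le j}p_i$. A schedule $\sigma$ assigns start times $S_j(\sigma)\ge0$, non-preemptive single-machine processing with $C_j(\sigma)=S_j(\sigma)+p_j$, no overlaps, and each job has $C_j(\sigma)\le T_1$ or $S_j(\sigma)\ge T_2$. $\Delta_j=|C_j(\sigma)-C_j(\pi^* )|$, $\Delta_{\max}=\max_j\Delta_j$. Feasible means $\Delta_{\max}\le k$; optimal means feasible and minimizing $\mu\Delta_{\max}+\sum_j w_jC_j(\sigma)$. The earlier schedule consists of jobs with $C_j(\sigma)\le T_1$; the later schedule of jobs completed after $T_2$. An idle period of the earlier schedule is a maximal time interval of positive length, contained in $[0,c]$ where $c$ is the largest completion time of an earlier-schedule job, during which no job is processed. The machine idles in the later schedule if some time interval of positive length within $[T_2,c']$, where $c'$ is the largest completion time of a later-schedule job, contains no processing. Standing assumptions: some job has $C_j(\pi^* )>T_1$; with $j_1$ the smallest such index, $p_{\min}\le T_1<P$ and $T_2-S_{j_1}(\pi^* )\le k$, where $p_{\min}=\min_jp_j$, $P=\sum_jp_j$. *)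

theory Defs
  imports Complex_Main
begin

definition Spi :: "(nat \<Rightarrow> nat) \<Rightarrow> nat \<Rightarrow> real" where
  "Spi p j = real (\<Sum>i\<in>{1..<j}. p i)"

definition Cpi :: "(nat \<Rightarrow> nat) \<Rightarrow> nat \<Rightarrow> real" where
  "Cpi p j = real (\<Sum>i\<in>{1..j}. p i)"

definition Cs :: "(nat \<Rightarrow> nat) \<Rightarrow> (nat \<Rightarrow> real) \<Rightarrow> nat \<Rightarrow> real" where
  "Cs p S j = S j + real (p j)"

definition is_schedule :: "nat \<Rightarrow> (nat \<Rightarrow> nat) \<Rightarrow> int \<Rightarrow> int \<Rightarrow> (nat \<Rightarrow> real) \<Rightarrow> bool" where
  "is_schedule n p T1 T2 S \<longleftrightarrow>
     (\<forall>j\<in>{1..n}. S j \<ge> 0) \<and>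
     (\<forall>i\<in>{1..n}. \<forall>j\<in>{1..n}. i \<noteq> j \<longrightarrow> Cs p S i \<le> S j \<or> Cs p S j \<le> S i) \<and>
     (\<forall>j\<in>{1..n}. Cs p S j \<le> real_of_int T1 \<or> S j \<ge> real_of_int T2)"

definition dev :: "(nat \<Rightarrow> nat) \<Rightarrow> (nat \<Rightarrow> real) \<Rightarrow> nat \<Rightarrow> real" where
  "dev p S j = \<bar>Cs p S j - Cpi p j\<bar>"

definition Dmax :: "nat \<Rightarrow> (nat \<Rightarrow> nat) \<Rightarrow> (nat \<Rightarrow> real) \<Rightarrow> real" where
  "Dmax n p S = Max (dev p S ` {1..n})"

definition feasible :: "nat \<Rightarrow> (nat \<Rightarrow> nat) \<Rightarrow> int \<Rightarrow> int \<Rightarrow> int \<Rightarrow> (nat \<Rightarrow> real) \<Rightarrow> bool" where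
  "feasible n p T1 T2 k S \<longleftrightarrow> is_schedule n p T1 T2 S \<and> Dmax n p S \<le> real_of_int k"

definition cost :: "nat \<Rightarrow> (nat \<Rightarrow> nat) \<Rightarrow> (nat \<Rightarrow> nat) \<Rightarrow> rat \<Rightarrow> (nat \<Rightarrow> real) \<Rightarrow> real" where
  "cost n p w \<mu> S = of_rat \<mu> * Dmax n p S + (\<Sum>j\<in>{1..n}. real (w j) * Cs p S j)"

definition optimal :: "nat \<Rightarrow> (nat \<Rightarrow> nat) \<Rightarrow> (nat \<Rightarrow> nat) \<Rightarrow> int \<Rightarrow> int \<Rightarrow> int \<Rightarrow> rat \<Rightarrow> (nat \<Rightarrow> real) \<Rightarrow> bool" where
  "optimal n p w T1 T2 k \<mu> S \<longleftrightarrow> feasible n p T1 T2 k S \<and>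
     (\<forall>S'. feasible n p T1 T2 k S' \<longrightarrow> cost n p w \<mu> S \<le> cost n p w \<mu> S')"

definition earlier :: "nat \<Rightarrow> (nat \<Rightarrow> nat) \<Rightarrow> int \<Rightarrow> (nat \<Rightarrow> real) \<Rightarrow> nat set" where
  "earlier n p T1 S = {j\<in>{1..n}. Cs p S j \<le> real_of_int T1}"

definition later :: "nat \<Rightarrow> (nat \<Rightarrow> nat) \<Rightarrow> int \<Rightarrow> (nat \<Rightarrow> real) \<Rightarrow> nat set" where
  "later n p T2 S = {j\<in>{1..n}. Cs p S j > real_of_int T2}"

definition free_int :: "nat set \<Rightarrow> (nat \<Rightarrow> nat) \<Rightarrow> (nat \<Rightarrow> real) \<Rightarrow> real \<Rightarrow> real \<Rightarrow> bool" where
  "free_int E p S a b \<longleftrightarrow> (\<forall>j\<in>E. Cs p S j \<le> a \<or> b \<le> S j)"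

definition idle_period :: "nat set \<Rightarrow> (nat \<Rightarrow> nat) \<Rightarrow> (nat \<Rightarrow> real) \<Rightarrow> real \<Rightarrow> real \<Rightarrow> bool" where
  "idle_period E p S a b \<longleftrightarrow> E \<noteq> {} \<and> a < b \<and> 0 \<le> a \<and> b \<le> Max (Cs p S ` E) \<and>
     free_int E p S a b \<and>
     (\<forall>a' b'. a' \<le> a \<and> b \<le> b' \<and> 0 \<le> a' \<and> b' \<le> Max (Cs p S ` E) \<and> free_int E p S a' b'
        \<longrightarrow> a' = a \<and> b' = b)"

definition idles_after :: "nat set \<Rightarrow> (nat \<Rightarrow> nat) \<Rightarrow> (nat \<Rightarrow> real) \<Rightarrow> real \<Rightarrow> bool" where
  "idles_after L p S T \<longleftrightarrow> L \<noteq> {} \<and>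
     (\<exists>a b. T \<le> a \<and> a < b \<and> b \<le> Max (Cs p S ` L) \<and> free_int L p S a b)"

end

theory Submission
  imports Defs "HOL-Analysis.Elementary_Topology"
begin

text \<open>An optimal schedule can be found in a two-parameter family. For a set \<open>E\<close> of earlier jobs and
  a deviation bound \<open>D\<close>, the canonical schedule processes the jobs of \<open>E\<close> in index order, each as
  early as the bound permits, and the other jobs in index order from \<open>T2\<close> on without idle time;
  its cost is at most \<open>\<mu> D\<close> plus its weighted completion time. By Smith's rule, every feasible
  schedule with earlier set \<open>E\<close> and maximum deviation \<open>D\<close> costs at least this bound, and the
  bound, being continuous in \<open>D\<close> on a compact set, attains its minimum over the finitely many
  \<open>E\<close>. At a minimum at most one earlier job can start after idle time: with two of them, a later
  job with index in between could be moved into the earlier idle period at lower cost. The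
  properties (a)-(g) are then read off the canonical schedule of a minimum.\<close>

section \<open>Greedy completion times of the earlier jobs\<close>

lemma Spi_Suc: "Spi p (Suc j) = Cpi p j"
  unfolding Spi_def Cpi_def by (simp add: atLeastLessThanSuc_atLeastAtMost)

lemma Cpi_Suc: "Cpi p (Suc j) = Cpi p j + real (p (Suc j))"
  unfolding Cpi_def by simp

lemma Cpi_eq_Spi_plus: "1 \<le> j \<Longrightarrow> Cpi p j = Spi p j + real (p j)"
  using Cpi_Suc[of p "j - 1"] Spi_Suc[of p "j - 1"] by simp

lemma Spi_mono: "i \<le> j \<Longrightarrow> Spi p i \<le> Spi p j"
  unfolding Spi_def by (intro of_nat_mono sum_mono2) auto

lemma Cpi_mono: "i \<le> j \<Longrightarrow> Cpi p i \<le> Cpi p j"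
  unfolding Cpi_def by (intro of_nat_mono sum_mono2) auto

lemma Cpi_le_Spi: "i < j \<Longrightarrow> Cpi p i \<le> Spi p j"
  using Spi_Suc[of p i] Spi_mono[of "Suc i" j p] by simp

text \<open>The jobs of \<open>E\<close> are processed in index order, each started as early as possible subject
  to finishing no earlier than \<open>Cpi p j - D\<close>; \<open>Cgreedy p E D j\<close> is the completion time of the
  last job of \<open>E\<close> with index at most \<open>j\<close>, or \<open>0\<close> if there is none.\<close>
primrec Cgreedy :: "(nat \<Rightarrow> nat) \<Rightarrow> nat set \<Rightarrow> real \<Rightarrow> nat \<Rightarrow> real" where
  "Cgreedy p E D 0 = 0"
| "Cgreedy p E D (Suc j) =
     (if Suc j \<in> E then max (Cgreedy p E D j) (Spi p (Suc j) - D) + real (p (Suc j))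
      else Cgreedy p E D j)"

lemma Cgreedy_nonneg: "0 \<le> Cgreedy p E D j"
  by (induction j) auto

lemma Cgreedy_mono: "i \<le> j \<Longrightarrow> Cgreedy p E D i \<le> Cgreedy p E D j"
  by (rule lift_Suc_mono_le[of "Cgreedy p E D"]) auto

lemma Cgreedy_le_Cpi: "0 \<le> D \<Longrightarrow> Cgreedy p E D j \<le> Cpi p j"
proof (induction j)
  case (Suc j)
  then show ?case using Spi_Suc[of p j] Cpi_Suc[of p j] by auto
qed (simp add: Cpi_def)

lemma Cgreedy_mem:
  "j \<in> E \<Longrightarrow> 1 \<le> j \<Longrightarrow>
     Cgreedy p E D j = max (Cgreedy p E D (j - 1)) (Spi p j - D) + real (p j)"
  by (cases j) auto

lemma Cgreedy_not_mem: "j \<notin> E \<Longrightarrow> 1 \<le> j \<Longrightarrow> Cgreedy p E D j = Cgreedy p E D (j - 1)"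
  by (cases j) auto

lemma Cgreedy_ge_Cpi_minus: "j \<in> E \<Longrightarrow> 1 \<le> j \<Longrightarrow> Cpi p j - D \<le> Cgreedy p E D j"
  using Cgreedy_mem[of j E p D] Cpi_eq_Spi_plus[of j p] by auto

lemma Cgreedy_ge_sum: "0 \<notin> E \<Longrightarrow> (\<Sum>i\<in>{i\<in>E. i \<le> j}. real (p i)) \<le> Cgreedy p E D j"
proof (induction j)
  case 0
  then have "{i\<in>E. i \<le> 0} = {}" by auto
  then show ?case by (simp only: sum.empty Cgreedy.simps(1) order_refl)
next
  case (Suc j)
  show ?case
  proof (cases "Suc j \<in> E")
    case True
    then have "{i\<in>E. i \<le> Suc j} = insert (Suc j) {i\<in>E. i \<le> j}" by auto
    then show ?thesis using Suc True by auto
  next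
    case False
    then have "{i\<in>E. i \<le> Suc j} = {i\<in>E. i \<le> j}" using le_Suc_eq by auto
    then show ?thesis using Suc False by auto
  qed
qed

lemma Cgreedy_eq_0: "\<forall>i\<in>E. j < i \<Longrightarrow> Cgreedy p E D j = 0"
  by (induction j) (auto intro: Suc_lessD)

lemma Cgreedy_const:
  "\<forall>x. a < x \<and> x \<le> b \<longrightarrow> x \<notin> E \<Longrightarrow> a \<le> b \<Longrightarrow> Cgreedy p E D b = Cgreedy p E D a"
  by (induction b) (auto simp: le_Suc_eq)

lemma Cgreedy_last:
  "Cgreedy p E D m = 0 \<or> (\<exists>i\<in>E. 1 \<le> i \<and> i \<le> m \<and> Cgreedy p E D m = Cgreedy p E D i)"
proof (induction m)
  case (Suc m)
  then show ?case
    by (cases "Suc m \<in> E") (auto intro: le_SucI)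
qed simp

lemma continuous_on_Cgreedy: "continuous_on A (\<lambda>D. Cgreedy p E D j)"
proof (induction j)
  case (Suc j)
  then show ?case by (cases "Suc j \<in> E") (auto intro!: continuous_intros)
qed simp

lemma Cgreedy_eq_Cpi_minus_from:
  assumes "g \<in> E" "1 \<le> g" "Cgreedy p E D (g - 1) < Spi p g - D"
  shows "g \<le> j \<Longrightarrow> {g..j} \<subseteq> E \<Longrightarrow> Cgreedy p E D j = Cpi p j - D"
proof (induction j)
  case (Suc j)
  show ?case
  proof (cases "g = Suc j")
    case True
    then show ?thesis using assms Cgreedy_mem[of g E p D] Cpi_eq_Spi_plus[of g p] by simp
  next
    case False
    then have "g \<le> j" "{g..j} \<subseteq> E" "Suc j \<in> E" using Suc.prems by auto
    with Suc.IH have "Cgreedy p E D j = Cpi p j - D" by blast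
    then show ?thesis using \<open>Suc j \<in> E\<close> Spi_Suc[of p j] Cpi_Suc[of p j] by simp
  qed
qed (use assms in simp)

lemma Cgreedy_insert:
  assumes "i \<notin> E" "1 \<le> i" "Cgreedy p E D (i - 1) \<le> Spi p i - D"
  shows "Cgreedy p (insert i E) D j =
    (if j < i then Cgreedy p E D j else max (Cgreedy p E D j) (Cpi p i - D))"
proof (induction j)
  case (Suc j)
  consider "Suc j < i" | "Suc j = i" | "i < Suc j" by linarith
  then show ?case
  proof cases
    case 1
    then show ?thesis using Suc by simp
  next
    case 2
    have "Cgreedy p (insert i E) D (Suc j) = max (Cgreedy p E D j) (Spi p (Suc j) - D) + real (p (Suc j))"
      using Suc unfolding 2[symmetric] by simp
    also have "\<dots> = Cpi p i - D"
      using 2 assms(3) Cpi_eq_Spi_plus[OF assms(2), of p] by (auto simp: max_def)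
    finally have "Cgreedy p (insert i E) D (Suc j) = Cpi p i - D" .
    moreover have "Cgreedy p E D (Suc j) \<le> Cpi p i - D"
      using assms Cpi_eq_Spi_plus[OF assms(2), of p] unfolding 2[symmetric] by simp
    ultimately show ?thesis using 2 by simp
  next
    case 3
    then have IH: "Cgreedy p (insert i E) D j = max (Cgreedy p E D j) (Cpi p i - D)"
      using Suc by simp
    have c: "Cpi p i - D \<le> Spi p (Suc j) - D" using 3 Spi_Suc[of p j] Cpi_mono[of i j p] by simp
    show ?thesis
    proof (cases "Suc j \<in> E")
      case True
      then have "Cgreedy p (insert i E) D (Suc j) = Cgreedy p E D (Suc j)"
        using 3 IH c by (simp add: max.assoc max.absorb2[OF c])
      moreover have "Cpi p i - D \<le> Cgreedy p E D (Suc j)" using True c by simp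
      ultimately show ?thesis using 3 by simp
    next
      case False
      then show ?thesis using 3 IH by simp
    qed
  qed
qed (use assms(2) in simp)

lemma Cgreedy_insert_at:
  assumes "i \<notin> E" "1 \<le> i" "Cgreedy p E D (i - 1) \<le> Spi p i - D"
  shows "Cgreedy p (insert i E) D i = Cpi p i - D"
  using Cgreedy_insert[OF assms, of i] Cgreedy_not_mem[OF assms(1,2), of p D] assms(3)
    Cpi_eq_Spi_plus[OF assms(2), of p] by simp

lemma Cgreedy_insert_mem:
  assumes "i \<notin> E" "1 \<le> i" "Cgreedy p E D (i - 1) \<le> Spi p i - D" and j: "j \<in> E" "1 \<le> j"
  shows "Cgreedy p (insert i E) D j = Cgreedy p E D j"
proof (cases "j < i")
  case False
  then have "Cpi p i - D \<le> Cgreedy p E D j"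
    using Cgreedy_ge_Cpi_minus[OF j, of p D] Cpi_mono[of i j p] by simp
  then show ?thesis using Cgreedy_insert[OF assms(1-3), of j] False by simp
qed (use Cgreedy_insert[OF assms(1-3), of j] in simp)

section \<open>Smith's rule\<close>

definition non_overlapping :: "nat set \<Rightarrow> (nat \<Rightarrow> nat) \<Rightarrow> (nat \<Rightarrow> real) \<Rightarrow> bool" where
  "non_overlapping A p S \<longleftrightarrow>
     (\<forall>i\<in>A. \<forall>j\<in>A. i \<noteq> j \<longrightarrow> S i + real (p i) \<le> S j \<or> S j + real (p j) \<le> S i)"

lemma non_overlapping_subset: "non_overlapping A p S \<Longrightarrow> B \<subseteq> A \<Longrightarrow> non_overlapping B p S"
  unfolding non_overlapping_def by blast

lemma finite_ex_arg_max:
  fixes f :: "'a \<Rightarrow> 'b::linorder"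
  assumes "finite A" "A \<noteq> {}"
  obtains m where "m \<in> A" "\<forall>x\<in>A. f x \<le> f m"
  using Max_in[of "f ` A"] Max_ge[of "f ` A"] assms by fastforce

lemma non_overlapping_makespan_ge:
  assumes "finite A" "non_overlapping A p S" "\<forall>j\<in>A. 0 < p j" "\<forall>j\<in>A. t \<le> S j"
    and "m \<in> A" "\<forall>x\<in>A. S x \<le> S m"
  shows "t + (\<Sum>i\<in>A. real (p i)) \<le> S m + real (p m)"
  using assms
proof (induction A arbitrary: m rule: finite_remove_induct)
  case (remove A)
  define A' where "A' = A - {m}"
  have sum_A: "(\<Sum>i\<in>A. real (p i)) = real (p m) + (\<Sum>i\<in>A'. real (p i))"
    using remove.hyps(1) remove.prems(4) A'_def by (simp add: sum.remove)
  show ?case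
  proof (cases "A' = {}")
    case True
    then show ?thesis using sum_A remove.prems(3,4) by simp
  next
    case False
    obtain m' where m': "m' \<in> A'" "\<forall>x\<in>A'. S x \<le> S m'"
      using finite_ex_arg_max[of A' S] remove.hyps(1) False A'_def by blast
    have "t + (\<Sum>i\<in>A'. real (p i)) \<le> S m' + real (p m')"
      using remove.IH[of m m'] remove.prems non_overlapping_subset[of A p S A'] m' A'_def
      by auto
    moreover have "S m' + real (p m') \<le> S m"
    proof -
      have "m' \<in> A" "m' \<noteq> m" using m'(1) A'_def by auto
      then show ?thesis
        using remove.prems(1,2,4,5) unfolding non_overlapping_def by fastforce
    qed
    ultimately show ?thesis using sum_A by linarith
  qed
qed simp

lemma wspt_prefix_sum_remove:
  fixes A :: "'a::linorder set" and p w :: "'a \<Rightarrow> nat"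
  assumes "finite A" "m \<in> A"
    and wspt: "\<forall>i\<in>A. \<forall>j\<in>A. i \<le> j \<longrightarrow> p i * w j \<le> p j * w i"
  shows "(\<Sum>j\<in>A. real (w j) * (\<Sum>i\<in>{i\<in>A. i \<le> j}. real (p i)))
    \<le> (\<Sum>j\<in>A - {m}. real (w j) * (\<Sum>i\<in>{i\<in>A - {m}. i \<le> j}. real (p i)))
       + real (w m) * (\<Sum>i\<in>A. real (p i))"
proof -
  define A' where "A' = A - {m}"
  define G where "G = {j\<in>A. m < j}"
  have prefix: "(\<Sum>i\<in>{i\<in>A. i \<le> j}. real (p i))
      = (\<Sum>i\<in>{i\<in>A'. i \<le> j}. real (p i)) + (if m \<le> j then real (p m) else 0)" for j
  proof (cases "m \<le> j")
    case True
    then have "{i\<in>A. i \<le> j} = insert m {i\<in>A'. i \<le> j}" using assms(2) A'_def by auto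
    then show ?thesis using True assms(1) A'_def by simp
  next
    case False
    then have "{i\<in>A. i \<le> j} = {i\<in>A'. i \<le> j}" using A'_def by auto
    then show ?thesis using False by simp
  qed
  have "(\<Sum>j\<in>A'. real (w j) * (if m \<le> j then real (p m) else 0))
      = (\<Sum>j\<in>{j\<in>A'. m \<le> j}. real (w j) * real (p m))"
    using assms(1) unfolding A'_def by (subst sum.inter_filter) (auto intro!: sum.cong split: if_splits)
  also have "{j\<in>A'. m \<le> j} = G" unfolding A'_def G_def by auto
  finally have shifted: "(\<Sum>j\<in>A'. real (w j) * (if m \<le> j then real (p m) else 0))
      = (\<Sum>j\<in>G. real (w j) * real (p m))" .
  have exchange: "(\<Sum>j\<in>G. real (w j) * real (p m)) \<le> (\<Sum>j\<in>G. real (w m) * real (p j))"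
  proof (rule sum_mono)
    fix j assume "j \<in> G"
    then have "p m * w j \<le> p j * w m" using wspt assms(2) unfolding G_def by auto
    then show "real (w j) * real (p m) \<le> real (w m) * real (p j)"
      by (metis mult.commute of_nat_le_iff of_nat_mult)
  qed
  have split_A: "(\<Sum>i\<in>A. real (p i)) = (\<Sum>i\<in>{i\<in>A. i \<le> m}. real (p i)) + (\<Sum>i\<in>G. real (p i))"
    using assms(1) unfolding G_def
    by (subst sum.union_disjoint[symmetric]) (auto intro: sum.cong)
  have "(\<Sum>j\<in>A. real (w j) * (\<Sum>i\<in>{i\<in>A. i \<le> j}. real (p i)))
      = (\<Sum>j\<in>A'. real (w j) * (\<Sum>i\<in>{i\<in>A'. i \<le> j}. real (p i)))
        + (\<Sum>j\<in>G. real (w j) * real (p m))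
        + real (w m) * (\<Sum>i\<in>{i\<in>A. i \<le> m}. real (p i))"
    using assms(1,2) shifted
    by (simp add: A'_def sum.remove prefix distrib_left sum.distrib)
  also have "\<dots> \<le> (\<Sum>j\<in>A'. real (w j) * (\<Sum>i\<in>{i\<in>A'. i \<le> j}. real (p i)))
        + real (w m) * (\<Sum>i\<in>A. real (p i))"
    using exchange split_A by (simp add: sum_distrib_left distrib_left)
  finally show ?thesis unfolding A'_def .
qed

text \<open>The left-hand side is the cost of processing \<open>A\<close> in index (that is, WSPT)
  order from \<open>t\<close> on without idle time.\<close>
lemma non_overlapping_weighted_completion_ge:
  fixes A :: "nat set"
  assumes "finite A" "non_overlapping A p S" "\<forall>j\<in>A. 0 < p j" "\<forall>j\<in>A. t \<le> S j"
    and "\<forall>i\<in>A. \<forall>j\<in>A. i \<le> j \<longrightarrow> p i * w j \<le> p j * w i"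
  shows "(\<Sum>j\<in>A. real (w j) * (t + (\<Sum>i\<in>{i\<in>A. i \<le> j}. real (p i))))
    \<le> (\<Sum>j\<in>A. real (w j) * (S j + real (p j)))"
  using assms
proof (induction A rule: finite_remove_induct)
  case (remove A)
  obtain m where m: "m \<in> A" "\<forall>x\<in>A. S x \<le> S m"
    using finite_ex_arg_max[of A S] remove.hyps(1,2) by blast
  define A' where "A' = A - {m}"
  have IH: "(\<Sum>j\<in>A'. real (w j) * (t + (\<Sum>i\<in>{i\<in>A'. i \<le> j}. real (p i))))
      \<le> (\<Sum>j\<in>A'. real (w j) * (S j + real (p j)))"
    using remove.IH[OF m(1)] remove.prems non_overlapping_subset[of A p S A'] A'_def by auto
  have makespan: "t + (\<Sum>i\<in>A. real (p i)) \<le> S m + real (p m)"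
    using non_overlapping_makespan_ge[OF remove.hyps(1) remove.prems(1-3) m] .
  have "(\<Sum>j\<in>A. real (w j) * (t + (\<Sum>i\<in>{i\<in>A. i \<le> j}. real (p i))))
      = t * (\<Sum>j\<in>A. real (w j)) + (\<Sum>j\<in>A. real (w j) * (\<Sum>i\<in>{i\<in>A. i \<le> j}. real (p i)))"
    by (simp add: distrib_left sum.distrib sum_distrib_left mult.commute)
  also have "\<dots> \<le> t * (\<Sum>j\<in>A. real (w j))
      + (\<Sum>j\<in>A'. real (w j) * (\<Sum>i\<in>{i\<in>A'. i \<le> j}. real (p i))) + real (w m) * (\<Sum>i\<in>A. real (p i))"
    using wspt_prefix_sum_remove[OF remove.hyps(1) m(1) remove.prems(4)] A'_def by simp
  also have "\<dots> = (\<Sum>j\<in>A'. real (w j) * (t + (\<Sum>i\<in>{i\<in>A'. i \<le> j}. real (p i))))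
      + real (w m) * (t + (\<Sum>i\<in>A. real (p i)))"
    using remove.hyps(1) m(1) unfolding A'_def
    by (simp add: sum.remove distrib_left sum.distrib sum_distrib_left algebra_simps)
  also have "\<dots> \<le> (\<Sum>j\<in>A'. real (w j) * (S j + real (p j))) + real (w m) * (S m + real (p m))"
    using IH makespan by (simp add: add_mono mult_left_mono)
  also have "\<dots> = (\<Sum>j\<in>A. real (w j) * (S j + real (p j)))"
    using remove.hyps(1) m(1) unfolding A'_def by (simp add: sum.remove)
  finally show ?case .
qed simp

section \<open>Lower bounds from the greedy completion times\<close>

lemma Cgreedy_busy_block:
  assumes s: "s \<in> E" "1 \<le> s" "Cgreedy p E D (s - 1) \<le> max 0 (Spi p s - D)"
    and busy: "\<And>j. j \<in> E \<Longrightarrow> s < j \<Longrightarrow> j \<le> N \<Longrightarrow> max 0 (Spi p j - D) < Cgreedy p E D (j - 1)"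
    and "s \<le> j" "j \<le> N"
  shows "Cgreedy p E D j = max 0 (Spi p s - D) + (\<Sum>i\<in>{i\<in>E. s \<le> i \<and> i \<le> j}. real (p i))"
  using assms(5,6)
proof (induction j rule: dec_induct)
  case base
  have "max (Cgreedy p E D (s - 1)) (Spi p s - D) = max 0 (Spi p s - D)"
    using s(3) Cgreedy_nonneg[of p E D "s - 1"] by (auto simp: max_def split: if_splits)
  moreover have "{i\<in>E. s \<le> i \<and> i \<le> s} = {s}" using s(1) by auto
  ultimately show ?case using Cgreedy_mem[OF s(1,2), of p D] by simp
next
  case (step j)
  show ?case
  proof (cases "Suc j \<in> E")
    case True
    then have "max 0 (Spi p (Suc j) - D) < Cgreedy p E D j"
      using busy[of "Suc j"] step.hyps(1,2) step.prems by simp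
    then have "max (Cgreedy p E D j) (Spi p (Suc j) - D) = Cgreedy p E D j" by simp
    then have "Cgreedy p E D (Suc j) = Cgreedy p E D j + real (p (Suc j))" using True by simp
    moreover have "{i\<in>E. s \<le> i \<and> i \<le> Suc j} = insert (Suc j) {i\<in>E. s \<le> i \<and> i \<le> j}"
      using True step.hyps(1) by auto
    moreover have "finite {i\<in>E. s \<le> i \<and> i \<le> j}" by (rule finite_subset[of _ "{..j}"]) auto
    ultimately show ?thesis using step.IH step.prems by simp
  next
    case False
    then have "{i\<in>E. s \<le> i \<and> i \<le> Suc j} = {i\<in>E. s \<le> i \<and> i \<le> j}"
      using le_Suc_eq by auto
    then show ?thesis using False step.IH step.prems by simp
  qed
qed

lemma Cgreedy_last_block:
  assumes fin: "finite E" and "0 \<notin> E" "x \<in> E" "x \<le> N"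
  obtains s where "s \<in> E" "1 \<le> s" "s \<le> N"
    and "\<And>j. s \<le> j \<Longrightarrow> j \<le> N \<Longrightarrow>
      Cgreedy p E D j = max 0 (Spi p s - D) + (\<Sum>i\<in>{i\<in>E. s \<le> i \<and> i \<le> j}. real (p i))"
proof -
  \<comment> \<open>\<open>B\<close>: the jobs that do not wait for their predecessor; the last of them opens the block\<close>
  define B where "B = {s\<in>E. s \<le> N \<and> Cgreedy p E D (s - 1) \<le> max 0 (Spi p s - D)}"
  define f where "f = Min {i\<in>E. i \<le> N}"
  have f: "f \<in> E" "f \<le> N"
    using Min_in[of "{i\<in>E. i \<le> N}"] fin assms(3,4) unfolding f_def by auto
  have "f - 1 < i" if "i \<in> E" for i
  proof (cases "i \<le> N")
    case True
    then have "f \<le> i" using Min_le[of "{i\<in>E. i \<le> N}" i] fin that unfolding f_def by auto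
    then show ?thesis using f(1) assms(2) by (cases f) auto
  qed (use f in auto)
  then have "f \<in> B" using f Cgreedy_eq_0[of E "f - 1"] unfolding B_def by simp
  then have "B \<noteq> {}" "finite B" using fin unfolding B_def by auto
  define s where "s = Max B"
  have s: "s \<in> E" "s \<le> N" "Cgreedy p E D (s - 1) \<le> max 0 (Spi p s - D)"
    using Max_in[OF \<open>finite B\<close> \<open>B \<noteq> {}\<close>] unfolding s_def B_def by auto
  have "1 \<le> s" using s(1) assms(2) by (cases s) auto
  have "max 0 (Spi p j - D) < Cgreedy p E D (j - 1)" if "j \<in> E" "s < j" "j \<le> N" for j
  proof -
    have "j \<notin> B" using that Max_ge[OF \<open>finite B\<close>, of j] unfolding s_def by auto
    then show ?thesis using that unfolding B_def by auto
  qed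
  then show ?thesis using that s(1,2) Cgreedy_busy_block[OF s(1) \<open>1 \<le> s\<close> s(3)] \<open>1 \<le> s\<close> by blast
qed

lemma max_release_le_start:
  assumes "1 \<le> s" "s \<le> j" "0 \<le> S j" "Cpi p j - D \<le> S j + real (p j)"
  shows "max 0 (Spi p s - D) \<le> S j"
  using assms Cpi_eq_Spi_plus[of j p] Spi_mono[of s j p] by simp

context
  fixes E :: "nat set" and p :: "nat \<Rightarrow> nat" and S :: "nat \<Rightarrow> real" and D :: real
  assumes fin: "finite E" and E0: "0 \<notin> E" and pos: "\<forall>j\<in>E. 0 < p j"
    and disj: "non_overlapping E p S" and S0: "\<forall>j\<in>E. 0 \<le> S j"
    and release: "\<forall>j\<in>E. Cpi p j - D \<le> S j + real (p j)"
begin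

lemma max_release_le_block_start:
  "1 \<le> s \<Longrightarrow> \<forall>j\<in>{j\<in>E. s \<le> j \<and> j \<le> N}. max 0 (Spi p s - D) \<le> S j"
  using max_release_le_start S0 release by blast

lemma Cgreedy_le_some_completion:
  assumes "x \<in> E" "x \<le> N"
  obtains j where "j \<in> E" "Cgreedy p E D N \<le> S j + real (p j)"
proof -
  obtain s where s: "s \<in> E" "1 \<le> s" "s \<le> N" and block: "\<And>j. s \<le> j \<Longrightarrow> j \<le> N \<Longrightarrow>
      Cgreedy p E D j = max 0 (Spi p s - D) + (\<Sum>i\<in>{i\<in>E. s \<le> i \<and> i \<le> j}. real (p i))"
    using Cgreedy_last_block[OF fin E0 assms] by blast
  define A where "A = {j\<in>E. s \<le> j \<and> j \<le> N}"
  have "finite A" "A \<subseteq> E" "A \<noteq> {}" using fin s unfolding A_def by auto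
  then obtain m where m: "m \<in> A" "\<forall>x\<in>A. S x \<le> S m" using finite_ex_arg_max[of A S] by blast
  have "\<forall>j\<in>A. 0 < p j" using pos \<open>A \<subseteq> E\<close> by blast
  then have "max 0 (Spi p s - D) + (\<Sum>i\<in>A. real (p i)) \<le> S m + real (p m)"
    using non_overlapping_makespan_ge[OF \<open>finite A\<close> non_overlapping_subset[OF disj \<open>A \<subseteq> E\<close>] _
        max_release_le_block_start[OF s(2), of N, folded A_def] m] by blast
  then show ?thesis using that m \<open>A \<subseteq> E\<close> block[OF s(3) order_refl] unfolding A_def by auto
qed

lemma Cgreedy_weighted_le:
  assumes wspt: "\<forall>i\<in>E. \<forall>j\<in>E. i \<le> j \<longrightarrow> p i * w j \<le> p j * w i"
  shows "(\<Sum>j\<in>{j\<in>E. j \<le> N}. real (w j) * Cgreedy p E D j)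
    \<le> (\<Sum>j\<in>{j\<in>E. j \<le> N}. real (w j) * (S j + real (p j)))"
proof (induction N rule: less_induct)
  case (less N)
  show ?case
  proof (cases "{j\<in>E. j \<le> N} = {}")
    case True
    then show ?thesis by (simp only: True sum.empty order_refl)
  next
    case False
    then obtain x where "x \<in> E" "x \<le> N" by auto
    then obtain s where s: "s \<in> E" "1 \<le> s" "s \<le> N" and block: "\<And>j. s \<le> j \<Longrightarrow> j \<le> N \<Longrightarrow>
        Cgreedy p E D j = max 0 (Spi p s - D) + (\<Sum>i\<in>{i\<in>E. s \<le> i \<and> i \<le> j}. real (p i))"
      using Cgreedy_last_block[OF fin E0] by blast
    define A where "A = {j\<in>E. s \<le> j \<and> j \<le> N}"
    have "finite A" "A \<subseteq> E" using fin unfolding A_def by auto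
    have "(\<Sum>j\<in>A. real (w j) * Cgreedy p E D j)
        = (\<Sum>j\<in>A. real (w j) * (max 0 (Spi p s - D) + (\<Sum>i\<in>{i\<in>A. i \<le> j}. real (p i))))"
      using block unfolding A_def by (intro sum.cong) (auto intro!: arg_cong[where f = "sum _"])
    also have "\<dots> \<le> (\<Sum>j\<in>A. real (w j) * (S j + real (p j)))"
      using non_overlapping_weighted_completion_ge[OF \<open>finite A\<close> non_overlapping_subset[OF disj \<open>A \<subseteq> E\<close>] _
          max_release_le_block_start[OF s(2), of N, folded A_def]]
        pos wspt \<open>A \<subseteq> E\<close> by blast
    finally have last_block: "(\<Sum>j\<in>A. real (w j) * Cgreedy p E D j) \<le> (\<Sum>j\<in>A. real (w j) * (S j + real (p j)))" .
    have "{j\<in>E. j \<le> N} = {j\<in>E. j \<le> s - 1} \<union> A" "{j\<in>E. j \<le> s - 1} \<inter> A = {}"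
      using s unfolding A_def by auto
    moreover have "finite {j\<in>E. j \<le> s - 1}" using fin by simp
    ultimately show ?thesis
      using less.IH[of "s - 1"] s last_block \<open>finite A\<close> by (simp add: sum.union_disjoint add_mono)
  qed
qed

end

section \<open>Canonical schedules\<close>

lemma dev_le_Dmax: "j \<in> {1..n} \<Longrightarrow> dev p S j \<le> Dmax n p S"
  unfolding Dmax_def by (rule Max_ge) auto

lemma Dmax_le_iff: "1 \<le> n \<Longrightarrow> Dmax n p S \<le> D \<longleftrightarrow> (\<forall>j\<in>{1..n}. dev p S j \<le> D)"
  unfolding Dmax_def by (subst Max_le_iff) auto

lemma Dmax_nonneg: "1 \<le> n \<Longrightarrow> 0 \<le> Dmax n p S"
  using dev_le_Dmax[of 1 n p S] unfolding dev_def by force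

locale rescheduling =
  fixes n :: nat and p w :: "nat \<Rightarrow> nat" and T1 T2 k :: int and \<mu> :: rat
  assumes pos_p: "\<forall>j\<in>{1..n}. p j > 0"
    and pos_w: "\<forall>j\<in>{1..n}. w j > 0"
    and wspt: "\<forall>i\<in>{1..n}. \<forall>j\<in>{1..n}. i \<le> j \<longrightarrow> p i * w j \<le> p j * w i"
    and T1_nonneg: "0 \<le> T1" and T1_T2: "T1 < T2"
    and mu_nonneg: "0 \<le> \<mu>"
    and T1_lt_P: "real_of_int T1 < real (\<Sum>j\<in>{1..n}. p j)"
    and n_pos: "1 \<le> n"
begin

definition late :: "nat set \<Rightarrow> nat set" where
  "late E = {1..n} - E"

definition canonical :: "nat set \<Rightarrow> real \<Rightarrow> nat \<Rightarrow> real" where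
  "canonical E D j = (if j \<in> E then Cgreedy p E D j - real (p j)
     else real_of_int T2 + (\<Sum>i\<in>{i\<in>late E. i < j}. real (p i)))"

definition Clate :: "nat set \<Rightarrow> nat \<Rightarrow> real" where
  "Clate E j = real_of_int T2 + (\<Sum>i\<in>{i\<in>late E. i \<le> j}. real (p i))"

definition cost_bound :: "nat set \<Rightarrow> real \<Rightarrow> real" where
  "cost_bound E D = of_rat \<mu> * D + (\<Sum>j\<in>E. real (w j) * Cgreedy p E D j)
     + (\<Sum>j\<in>late E. real (w j) * Clate E j)"

definition admissible :: "nat set \<Rightarrow> real \<Rightarrow> bool" where
  "admissible E D \<longleftrightarrow> E \<subseteq> {1..n} \<and> 0 \<le> D \<and> D \<le> real_of_int k \<and> Cgreedy p E D n \<le> real_of_int T1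
     \<and> (\<forall>j\<in>late E. real_of_int T2 - Spi p j \<le> D)"

lemma admissible_mem: "admissible E D \<Longrightarrow> j \<in> E \<Longrightarrow> 1 \<le> j \<and> j \<le> n"
  unfolding admissible_def by auto

lemma admissible_finite: "admissible E D \<Longrightarrow> finite E"
  unfolding admissible_def using finite_subset by blast

lemma canonical_early:
  "j \<in> E \<Longrightarrow> 1 \<le> j \<Longrightarrow> canonical E D j = max (Cgreedy p E D (j - 1)) (Spi p j - D)"
  unfolding canonical_def using Cgreedy_mem[of j E p D] by simp

lemma canonical_late:
  "j \<in> late E \<Longrightarrow> canonical E D j = real_of_int T2 + (\<Sum>i\<in>{i\<in>late E. i < j}. real (p i))"
  unfolding canonical_def late_def by auto

lemma Cs_canonical_early: "j \<in> E \<Longrightarrow> Cs p (canonical E D) j = Cgreedy p E D j"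
  unfolding Cs_def canonical_def by simp

lemma Cs_canonical_late: "j \<in> late E \<Longrightarrow> Cs p (canonical E D) j = Clate E j"
proof -
  assume j: "j \<in> late E"
  then have "{i\<in>late E. i \<le> j} = insert j {i\<in>late E. i < j}" by auto
  then show ?thesis using j unfolding Cs_def canonical_def Clate_def by (simp add: late_def)
qed

lemma Cgreedy_le_T1: "admissible E D \<Longrightarrow> j \<le> n \<Longrightarrow> Cgreedy p E D j \<le> real_of_int T1"
  using Cgreedy_mono[of j n p E D] unfolding admissible_def by linarith

lemma sum_early_le_Cgreedy:
  "admissible E D \<Longrightarrow> (\<Sum>i\<in>{i\<in>E. i \<le> j}. real (p i)) \<le> Cgreedy p E D j"
  using Cgreedy_ge_sum[of E p j D] admissible_mem[of E D 0] by auto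

lemma T2_less_Clate: "j \<in> late E \<Longrightarrow> real_of_int T2 < Clate E j"
proof -
  assume j: "j \<in> late E"
  then have "real (p j) \<le> (\<Sum>i\<in>{i\<in>late E. i \<le> j}. real (p i))"
    by (intro member_le_sum) (auto simp: late_def)
  then show ?thesis unfolding Clate_def using pos_p j unfolding late_def by fastforce
qed

lemma late_nonempty: "admissible E D \<Longrightarrow> late E \<noteq> {}"
proof
  assume adm: "admissible E D" and "late E = {}"
  then have "{i\<in>E. i \<le> n} = {1..n}" unfolding late_def admissible_def by auto
  then have "real (\<Sum>j\<in>{1..n}. p j) \<le> Cgreedy p E D n"
    using sum_early_le_Cgreedy[OF adm, of n] by simp
  then show False using adm T1_lt_P unfolding admissible_def by simp
qed

lemma Spi_le_sum_early:
  assumes "admissible E D" "x \<le> Min (late E)" "x \<le> Suc y"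
  shows "Spi p x \<le> (\<Sum>i\<in>{i\<in>E. i \<le> y}. real (p i))"
proof -
  have "Min (late E) \<in> late E" using Min_in late_nonempty[OF assms(1)] unfolding late_def by blast
  have "i \<in> E" if "1 \<le> i" "i < Min (late E)" for i
  proof (rule ccontr)
    assume "i \<notin> E"
    then have "i \<in> late E" using that \<open>Min (late E) \<in> late E\<close> unfolding late_def by auto
    moreover have "finite (late E)" unfolding late_def by simp
    ultimately have "Min (late E) \<le> i" using Min_le by blast
    then show False using that(2) by simp
  qed
  then have "{1..<x} \<subseteq> {i\<in>E. i \<le> y}" using assms(2,3) by auto
  then show ?thesis unfolding Spi_def by (simp add: sum_mono2)
qed

lemma Clate_minus_Cpi:
  assumes "admissible E D" "j \<in> late E"
  shows "Clate E j - Cpi p j = real_of_int T2 - (\<Sum>i\<in>{i\<in>E. i \<le> j}. real (p i))"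
proof -
  have "{1..j} = {i\<in>late E. i \<le> j} \<union> {i\<in>E. i \<le> j}" "{i\<in>late E. i \<le> j} \<inter> {i\<in>E. i \<le> j} = {}"
    using assms unfolding late_def admissible_def by auto
  then have "Cpi p j = (\<Sum>i\<in>{i\<in>late E. i \<le> j}. real (p i)) + (\<Sum>i\<in>{i\<in>E. i \<le> j}. real (p i))"
    unfolding Cpi_def of_nat_sum by (simp only:) (rule sum.union_disjoint, simp_all)
  then show ?thesis unfolding Clate_def by simp
qed

lemma Clate_deviation:
  assumes adm: "admissible E D" and j: "j \<in> late E"
  shows "0 < Clate E j - Cpi p j" "Clate E j - Cpi p j \<le> D"
proof -
  have "j \<le> n" using j unfolding late_def by simp
  then have "(\<Sum>i\<in>{i\<in>E. i \<le> j}. real (p i)) \<le> real_of_int T1"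
    using sum_early_le_Cgreedy[OF adm, of j] Cgreedy_le_T1[OF adm] by (meson order_trans)
  then show "0 < Clate E j - Cpi p j" using Clate_minus_Cpi[OF adm j] T1_T2 by simp
  define m where "m = Min (late E)"
  have "finite (late E)" unfolding late_def by simp
  then have "m \<in> late E" "m \<le> j" using Min_in[OF _ late_nonempty[OF adm]] Min_le j
    unfolding m_def by blast+
  then have "real_of_int T2 - Spi p m \<le> D" using adm unfolding admissible_def by blast
  moreover have "Spi p m \<le> (\<Sum>i\<in>{i\<in>E. i \<le> j}. real (p i))"
    using Spi_le_sum_early[OF adm, of m j] \<open>m \<le> j\<close> unfolding m_def by simp
  ultimately show "Clate E j - Cpi p j \<le> D" using Clate_minus_Cpi[OF adm j] by simp
qed

lemma canonical_early_late:
  assumes adm: "admissible E D"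
  shows "j \<in> E \<Longrightarrow> Cs p (canonical E D) j \<le> real_of_int T1"
    and "j \<in> late E \<Longrightarrow> real_of_int T2 < Cs p (canonical E D) j"
proof -
  show "Cs p (canonical E D) j \<le> real_of_int T1" if "j \<in> E"
    using Cs_canonical_early[OF that] Cgreedy_le_T1[OF adm] admissible_mem[OF adm that] by simp
  show "real_of_int T2 < Cs p (canonical E D) j" if "j \<in> late E"
    using Cs_canonical_late[OF that] T2_less_Clate[OF that] by simp
qed

lemma earlier_canonical: "admissible E D \<Longrightarrow> earlier n p T1 (canonical E D) = E"
proof (intro set_eqI iffI)
  fix j assume adm: "admissible E D" and "j \<in> earlier n p T1 (canonical E D)"
  then have j: "j \<in> {1..n}" "Cs p (canonical E D) j \<le> real_of_int T1" unfolding earlier_def by auto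
  show "j \<in> E"
  proof (rule ccontr)
    assume "j \<notin> E"
    then have "j \<in> late E" using j(1) unfolding late_def by simp
    then show False using canonical_early_late(2)[OF adm] j(2) T1_T2 by force
  qed
next
  fix j assume "admissible E D" "j \<in> E"
  then show "j \<in> earlier n p T1 (canonical E D)"
    using canonical_early_late(1) admissible_mem unfolding earlier_def by auto
qed

lemma later_canonical: "admissible E D \<Longrightarrow> later n p T2 (canonical E D) = late E"
proof (intro set_eqI iffI)
  fix j assume adm: "admissible E D" and "j \<in> later n p T2 (canonical E D)"
  then have j: "j \<in> {1..n}" "real_of_int T2 < Cs p (canonical E D) j" unfolding later_def by auto
  show "j \<in> late E"
  proof (rule ccontr)
    assume "j \<notin> late E"
    then have "j \<in> E" using j(1) unfolding late_def by simp
    then show False using canonical_early_late(1)[OF adm] j(2) T1_T2 by force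
  qed
next
  fix j assume "admissible E D" "j \<in> late E"
  then show "j \<in> later n p T2 (canonical E D)"
    using canonical_early_late(2) unfolding later_def late_def by auto
qed

lemma canonical_early_order:
  assumes "admissible E D" "i \<in> E" "j \<in> E" "i < j"
  shows "Cs p (canonical E D) i \<le> canonical E D j"
proof -
  have "Cgreedy p E D i \<le> Cgreedy p E D (j - 1)" using assms(4) by (intro Cgreedy_mono) simp
  then show ?thesis
    using canonical_early[OF assms(3)] admissible_mem[OF assms(1,3)] Cs_canonical_early[OF assms(2)]
    by simp
qed

lemma canonical_late_order:
  assumes "i \<in> late E" "j \<in> late E" "i < j"
  shows "Cs p (canonical E D) i \<le> canonical E D j"
proof -
  have "(\<Sum>l\<in>{l\<in>late E. l \<le> i}. real (p l)) \<le> (\<Sum>l\<in>{l\<in>late E. l < j}. real (p l))"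
    using assms(3) by (intro sum_mono2) (auto simp: late_def)
  then show ?thesis using Cs_canonical_late[OF assms(1)] canonical_late[OF assms(2)]
    unfolding Clate_def by simp
qed

lemma canonical_early_before_late:
  assumes "admissible E D" "i \<in> E" "j \<in> late E"
  shows "Cs p (canonical E D) i \<le> canonical E D j"
proof -
  have "0 \<le> (\<Sum>l\<in>{l\<in>late E. l < j}. real (p l))" by (simp add: sum_nonneg)
  then show ?thesis
    using Cgreedy_le_T1[OF assms(1), of i] admissible_mem[OF assms(1,2)] canonical_late[OF assms(3)]
      Cs_canonical_early[OF assms(2)] T1_T2 by simp
qed

lemma is_schedule_canonical: "admissible E D \<Longrightarrow> is_schedule n p T1 T2 (canonical E D)"
proof -
  assume adm: "admissible E D"
  have cases: "j \<in> E \<or> j \<in> late E" if "j \<in> {1..n}" for j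
    using that unfolding late_def by auto
  have "Cs p (canonical E D) i \<le> canonical E D j \<or> Cs p (canonical E D) j \<le> canonical E D i"
    if ij: "i \<in> {1..n}" "j \<in> {1..n}" "i \<noteq> j" for i j
  proof -
    consider "i \<in> E" "j \<in> E" | "i \<in> late E" "j \<in> late E" | "i \<in> E" "j \<in> late E"
      | "i \<in> late E" "j \<in> E"
      using cases ij(1,2) by blast
    then show ?thesis
    proof cases
      case 1
      then show ?thesis using ij(3) canonical_early_order[OF adm] by (metis linorder_neqE_nat)
    next
      case 2
      then show ?thesis using ij(3) canonical_late_order by (metis linorder_neqE_nat)
    qed (use canonical_early_before_late[OF adm] in blast)+
  qed
  moreover have "0 \<le> canonical E D j \<and>
      (Cs p (canonical E D) j \<le> real_of_int T1 \<or> real_of_int T2 \<le> canonical E D j)"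
    if "j \<in> {1..n}" for j
  proof (cases "j \<in> E")
    case True
    then show ?thesis
      using canonical_early[OF True] admissible_mem[OF adm True] Cgreedy_nonneg[of p E D "j - 1"]
        canonical_early_late(1)[OF adm True] by simp
  next
    case False
    then have "j \<in> late E" using that unfolding late_def by simp
    moreover have "0 \<le> (\<Sum>i\<in>{i\<in>late E. i < j}. real (p i))" by (simp add: sum_nonneg)
    ultimately show ?thesis using canonical_late[of j E D] T1_T2 T1_nonneg by simp
  qed
  ultimately show ?thesis unfolding is_schedule_def by blast
qed

lemma dev_canonical_le:
  assumes adm: "admissible E D" and j: "j \<in> {1..n}"
  shows "dev p (canonical E D) j \<le> D"
proof (cases "j \<in> E")
  case True
  have "0 \<le> D" using adm unfolding admissible_def by simp
  then show ?thesis
    using Cgreedy_ge_Cpi_minus[OF True, of p D] Cgreedy_le_Cpi[of D p E j] Cs_canonical_early[OF True] j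
    unfolding dev_def by simp
next
  case False
  then have "j \<in> late E" using j unfolding late_def by simp
  then show ?thesis
    using Cs_canonical_late[of j E D] Clate_deviation[OF adm] unfolding dev_def by (simp add: abs_of_pos)
qed

lemma Dmax_canonical_le: "admissible E D \<Longrightarrow> Dmax n p (canonical E D) \<le> D"
  using dev_canonical_le Dmax_le_iff[OF n_pos] by blast

lemma feasible_canonical: "admissible E D \<Longrightarrow> feasible n p T1 T2 k (canonical E D)"
  using is_schedule_canonical Dmax_canonical_le[of E D] unfolding feasible_def admissible_def
  by (meson order_trans)

lemma sum_early_late:
  "E \<subseteq> {1..n} \<Longrightarrow> (\<Sum>j\<in>{1..n}. f j) = (\<Sum>j\<in>E. f j) + (\<Sum>j\<in>late E. (f j :: real))"
  using sum.subset_diff[of E "{1..n}" f] unfolding late_def by simp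

lemma cost_canonical_le: "admissible E D \<Longrightarrow> cost n p w \<mu> (canonical E D) \<le> cost_bound E D"
proof -
  assume adm: "admissible E D"
  have "(\<Sum>j\<in>{1..n}. real (w j) * Cs p (canonical E D) j)
     = (\<Sum>j\<in>E. real (w j) * Cgreedy p E D j) + (\<Sum>j\<in>late E. real (w j) * Clate E j)"
    using adm sum_early_late[of E "\<lambda>j. real (w j) * Cs p (canonical E D) j"]
    unfolding admissible_def by (simp add: Cs_canonical_early Cs_canonical_late)
  moreover have "of_rat \<mu> * Dmax n p (canonical E D) \<le> of_rat \<mu> * D"
    using Dmax_canonical_le[OF adm] mu_nonneg by (simp add: mult_left_mono)
  ultimately show ?thesis unfolding cost_def cost_bound_def by simp
qed

subsection \<open>Lower bound for feasible schedules\<close>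

context
  fixes S assumes feas: "feasible n p T1 T2 k S"
begin

lemma feasible_late_start: "j \<in> late (earlier n p T1 S) \<Longrightarrow> real_of_int T2 \<le> S j"
  using feas unfolding feasible_def is_schedule_def late_def earlier_def by auto

lemma feasible_restrict:
  assumes "A \<subseteq> {1..n}"
  shows "finite A" "0 \<notin> A" "\<forall>j\<in>A. 0 < p j" "non_overlapping A p S" "\<forall>j\<in>A. 0 \<le> S j"
    and "\<forall>j\<in>A. Cpi p j - Dmax n p S \<le> S j + real (p j)"
proof -
  show "finite A" "0 \<notin> A" "\<forall>j\<in>A. 0 < p j" using assms pos_p finite_subset by auto
  show "non_overlapping A p S" "\<forall>j\<in>A. 0 \<le> S j"
    using assms feas unfolding feasible_def is_schedule_def non_overlapping_def Cs_def by blast+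
  show "\<forall>j\<in>A. Cpi p j - Dmax n p S \<le> S j + real (p j)"
    using assms dev_le_Dmax[of _ n p S] unfolding dev_def Cs_def by fastforce
qed

lemma admissible_earlier: "admissible (earlier n p T1 S) (Dmax n p S)"
proof -
  define E where "E = earlier n p T1 S"
  have E: "E \<subseteq> {1..n}" unfolding E_def earlier_def by auto
  have "Cgreedy p E (Dmax n p S) n \<le> real_of_int T1"
  proof (cases "E = {}")
    case True
    then show ?thesis using Cgreedy_eq_0[of E n p] T1_nonneg by simp
  next
    case False
    then obtain x where "x \<in> E" by blast
    moreover have "x \<le> n" using E \<open>x \<in> E\<close> by auto
    ultimately obtain j where "j \<in> E" "Cgreedy p E (Dmax n p S) n \<le> S j + real (p j)"
      using Cgreedy_le_some_completion[OF feasible_restrict[OF E]] by blast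
    then show ?thesis unfolding E_def earlier_def Cs_def by auto
  qed
  moreover have "real_of_int T2 - Spi p j \<le> Dmax n p S" if "j \<in> late E" for j
    using that feasible_late_start[of j] dev_le_Dmax[of j n p S] Cpi_eq_Spi_plus[of j p]
    unfolding E_def late_def dev_def Cs_def by force
  ultimately show ?thesis
    using E feas Dmax_nonneg[OF n_pos] unfolding admissible_def feasible_def E_def by blast
qed

lemma cost_bound_earlier_le:
  "cost_bound (earlier n p T1 S) (Dmax n p S) \<le> cost n p w \<mu> S"
proof -
  define E where "E = earlier n p T1 S"
  have E: "E \<subseteq> {1..n}" unfolding E_def earlier_def by auto
  have "{j\<in>E. j \<le> n} = E" using E by auto
  then have early: "(\<Sum>j\<in>E. real (w j) * Cgreedy p E (Dmax n p S) j)
      \<le> (\<Sum>j\<in>E. real (w j) * (S j + real (p j)))"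
    using Cgreedy_weighted_le[OF feasible_restrict[OF E], of w n] E wspt by (simp add: subset_eq)
  have L: "late E \<subseteq> {1..n}" unfolding late_def by auto
  have "\<forall>j\<in>late E. real_of_int T2 \<le> S j" using feasible_late_start unfolding E_def by blast
  moreover have "\<forall>i\<in>late E. \<forall>j\<in>late E. i \<le> j \<longrightarrow> p i * w j \<le> p j * w i" using wspt L by blast
  ultimately have late:
    "(\<Sum>j\<in>late E. real (w j) * Clate E j) \<le> (\<Sum>j\<in>late E. real (w j) * (S j + real (p j)))"
    using non_overlapping_weighted_completion_ge[OF feasible_restrict(1,4,3)[OF L]]
    unfolding Clate_def by blast
  have "cost n p w \<mu> S = of_rat \<mu> * Dmax n p S + (\<Sum>j\<in>E. real (w j) * (S j + real (p j)))
      + (\<Sum>j\<in>late E. real (w j) * (S j + real (p j)))"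
    unfolding cost_def using sum_early_late[OF E, of "\<lambda>j. real (w j) * Cs p S j"] unfolding Cs_def by simp
  then show ?thesis using early late unfolding cost_bound_def E_def by simp
qed

end

subsection \<open>Minimal cost bounds\<close>

definition cost_minimal :: "nat set \<Rightarrow> real \<Rightarrow> bool" where
  "cost_minimal E D \<longleftrightarrow> admissible E D \<and> (\<forall>E' D'. admissible E' D' \<longrightarrow> cost_bound E D \<le> cost_bound E' D')"

lemma compact_admissible: "compact {D. admissible E D}"
proof (cases "E \<subseteq> {1..n}")
  case True
  have "closed {D. Cgreedy p E D n \<le> real_of_int T1}"
    by (intro closed_Collect_le continuous_on_Cgreedy continuous_on_const)
  moreover have "{D. admissible E D} = {0..real_of_int k} \<inter> {D. Cgreedy p E D n \<le> real_of_int T1}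
      \<inter> (\<Inter>j\<in>late E. {real_of_int T2 - Spi p j..})"
    using True unfolding admissible_def by auto
  ultimately show ?thesis by (auto intro!: compact_Int_closed closed_INT)
qed (auto simp: admissible_def)

lemma continuous_on_cost_bound: "continuous_on A (cost_bound E)"
  unfolding cost_bound_def by (intro continuous_intros continuous_on_Cgreedy)

lemma cost_minimal_exists:
  assumes "admissible E0 D0"
  obtains E D where "cost_minimal E D"
proof -
  define V where "V = (\<Union>E\<in>Pow {1..n}. cost_bound E ` {D. admissible E D})"
  have "compact V" unfolding V_def
    by (intro compact_UN compact_continuous_image continuous_on_cost_bound compact_admissible) auto
  moreover have "V \<noteq> {}" using assms unfolding V_def admissible_def by blast
  ultimately obtain t where "t \<in> V" and min: "\<forall>s\<in>V. t \<le> s" using compact_attains_inf by blast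
  then obtain E D where "admissible E D" "t = cost_bound E D" unfolding V_def by blast
  moreover have "cost_bound E' D' \<in> V" if "admissible E' D'" for E' D'
    using that unfolding V_def admissible_def by blast
  ultimately show thesis using that min unfolding cost_minimal_def by blast
qed

lemma optimal_canonical: "cost_minimal E D \<Longrightarrow> optimal n p w T1 T2 k \<mu> (canonical E D)"
proof -
  assume min: "cost_minimal E D"
  then have adm: "admissible E D" unfolding cost_minimal_def by blast
  have "cost n p w \<mu> (canonical E D) \<le> cost n p w \<mu> S" if "feasible n p T1 T2 k S" for S
  proof -
    have "cost n p w \<mu> (canonical E D) \<le> cost_bound E D" using cost_canonical_le[OF adm] .
    also have "\<dots> \<le> cost_bound (earlier n p T1 S) (Dmax n p S)"
      using min admissible_earlier[OF that] unfolding cost_minimal_def by blast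
    also have "\<dots> \<le> cost n p w \<mu> S" using cost_bound_earlier_le[OF that] .
    finally show ?thesis .
  qed
  then show ?thesis unfolding optimal_def using feasible_canonical[OF adm] by blast
qed

subsection \<open>Idle periods of the earlier schedule\<close>

definition starts_after_gap :: "nat set \<Rightarrow> real \<Rightarrow> nat \<Rightarrow> bool" where
  "starts_after_gap E D g \<longleftrightarrow> g \<in> E \<and> Cgreedy p E D (g - 1) < Spi p g - D"

lemma starts_after_gap_range:
  "admissible E D \<Longrightarrow> starts_after_gap E D g \<Longrightarrow> g \<in> E \<and> 1 \<le> g \<and> g \<le> n"
  using admissible_mem unfolding starts_after_gap_def by blast

lemma Cgreedy_after_gap:
  "admissible E D \<Longrightarrow> starts_after_gap E D g \<Longrightarrow> g \<le> j \<Longrightarrow> {g..j} \<subseteq> E \<Longrightarrow>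
    Cgreedy p E D j = Cpi p j - D"
  using Cgreedy_eq_Cpi_minus_from starts_after_gap_range unfolding starts_after_gap_def by blast

lemma first_missing_after_gap:
  assumes adm: "admissible E D" and gap: "starts_after_gap E D g" and "i \<notin> E" "g < i"
  obtains i0 where "i0 \<notin> E" "g < i0" "i0 \<le> i" "Cgreedy p E D (i0 - 1) = Spi p i0 - D"
proof -
  define i0 where "i0 = (LEAST x. g < x \<and> x \<notin> E)"
  have i0: "g < i0" "i0 \<notin> E" "i0 \<le> i"
    using LeastI[of "\<lambda>x. g < x \<and> x \<notin> E" i] Least_le[of "\<lambda>x. g < x \<and> x \<notin> E" i] assms(3,4)
    unfolding i0_def by auto
  have "{g..i0 - 1} \<subseteq> E"
  proof
    fix x assume "x \<in> {g..i0 - 1}"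
    then show "x \<in> E"
      using not_less_Least[of x "\<lambda>x. g < x \<and> x \<notin> E"] gap i0(1)
      unfolding i0_def starts_after_gap_def by (cases "x = g") auto
  qed
  then have "Cgreedy p E D (i0 - 1) = Cpi p (i0 - 1) - D"
    using Cgreedy_after_gap[OF adm gap] i0(1) by simp
  then show ?thesis using that i0 Spi_Suc[of p "i0 - 1"] by simp
qed

lemma starts_after_gap_after_missing:
  assumes adm: "admissible E D" and gap: "starts_after_gap E D g"
    and "i \<notin> E" "g < i" "e \<in> E" "i < e"
  obtains g' where "starts_after_gap E D g'" "g < g'"
proof -
  obtain i0 where i0: "i0 \<notin> E" "g < i0" "i0 \<le> i" "Cgreedy p E D (i0 - 1) = Spi p i0 - D"
    using first_missing_after_gap[OF adm gap assms(3,4)] .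
  define e0 where "e0 = (LEAST x. x \<in> E \<and> i0 < x)"
  have e0: "e0 \<in> E" "i0 < e0"
    using LeastI[of "\<lambda>x. x \<in> E \<and> i0 < x" e] assms(5,6) i0(3) unfolding e0_def by auto
  have "x \<notin> E" if "i0 - 1 < x" "x \<le> e0 - 1" for x
  proof (cases "x = i0")
    case False
    then have "x < e0" "i0 < x" using that e0(2) by auto
    then show ?thesis using not_less_Least[of x "\<lambda>x. x \<in> E \<and> i0 < x"] unfolding e0_def by blast
  qed (use i0(1) in simp)
  then have "Cgreedy p E D (e0 - 1) = Cgreedy p E D (i0 - 1)"
    using e0(2) by (intro Cgreedy_const) auto
  moreover have "1 \<le> i0" "i0 \<le> n" using i0(2) e0 admissible_mem[OF adm] by force+
  then have "Spi p i0 + real (p i0) \<le> Spi p e0" "0 < p i0"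
    using Cpi_eq_Spi_plus[of i0 p] Cpi_le_Spi[OF e0(2), of p] pos_p by auto
  ultimately have "starts_after_gap E D e0"
    using e0(1) i0(4) unfolding starts_after_gap_def by simp
  then show ?thesis using that e0(2) i0(2) by simp
qed

lemma T2_less_Spi_gap:
  assumes adm: "admissible E D" and gap: "starts_after_gap E D g"
  shows "real_of_int T2 < Spi p g"
proof -
  define m where "m = Min (late E)"
  have m: "m \<in> late E" using Min_in[OF _ late_nonempty[OF adm]] unfolding m_def late_def by simp
  have before_gap: "Cgreedy p E D (g - 1) < Spi p g - D" and "0 \<le> D" "1 \<le> g"
    using gap adm starts_after_gap_range[OF adm gap] unfolding starts_after_gap_def admissible_def
    by auto
  have "m < g"
  proof (rule ccontr)
    assume "\<not> m < g"
    then have "Spi p g \<le> Cgreedy p E D (g - 1)"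
      using Spi_le_sum_early[OF adm, of g "g - 1"] sum_early_le_Cgreedy[OF adm, of "g - 1"] \<open>1 \<le> g\<close>
      unfolding m_def by simp
    then show False using before_gap \<open>0 \<le> D\<close> by simp
  qed
  then have "Spi p m \<le> Cgreedy p E D (g - 1)"
    using Spi_le_sum_early[OF adm, of m "g - 1"] sum_early_le_Cgreedy[OF adm, of "g - 1"]
    unfolding m_def by simp
  moreover have "real_of_int T2 - Spi p m \<le> D" using adm m unfolding admissible_def by blast
  ultimately show ?thesis using before_gap by simp
qed

lemma after_unique_gap:
  assumes adm: "admissible E D" and gap: "starts_after_gap E D g"
    and unique: "\<forall>g'. starts_after_gap E D g' \<longrightarrow> g' = g" and "j \<in> E" "g \<le> j"
  shows "{g..j} \<subseteq> E" "Cgreedy p E D j = Cpi p j - D"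
proof -
  show block: "{g..j} \<subseteq> E"
  proof
    fix i assume i: "i \<in> {g..j}"
    show "i \<in> E"
    proof (rule ccontr)
      assume "i \<notin> E"
      moreover have "g \<in> E" using gap unfolding starts_after_gap_def by simp
      ultimately have "g < i" "i < j" using i assms(4) by (auto simp: le_less)
      then show False
        using starts_after_gap_after_missing[OF adm gap \<open>i \<notin> E\<close> _ assms(4)] unique by fastforce
    qed
  qed
  show "Cgreedy p E D j = Cpi p j - D" using Cgreedy_after_gap[OF adm gap assms(5) block] .
qed

lemma missing_between_gaps:
  assumes adm: "admissible E D" and gap1: "starts_after_gap E D g1"
    and gap2: "starts_after_gap E D g2" and "g1 < g2"
  obtains i where "i \<notin> E" "g1 < i" "i < g2" "Cgreedy p E D (i - 1) = Spi p i - D"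
proof -
  have "\<exists>i. i \<notin> E \<and> g1 < i \<and> i < g2"
  proof (rule ccontr)
    assume none: "\<nexists>i. i \<notin> E \<and> g1 < i \<and> i < g2"
    have "{g1..g2 - 1} \<subseteq> E"
    proof
      fix x assume x: "x \<in> {g1..g2 - 1}"
      show "x \<in> E"
      proof (cases "x = g1")
        case False
        then have "g1 < x" "x < g2" using x \<open>g1 < g2\<close> by auto
        then show ?thesis using none by blast
      qed (use gap1 in \<open>simp add: starts_after_gap_def\<close>)
    qed
    moreover have "g1 \<le> g2 - 1" using \<open>g1 < g2\<close> by simp
    ultimately have "Cgreedy p E D (g2 - 1) = Cpi p (g2 - 1) - D"
      using Cgreedy_after_gap[OF adm gap1] by blast
    then show False using gap2 Spi_Suc[of p "g2 - 1"] \<open>g1 < g2\<close> unfolding starts_after_gap_def by simp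
  qed
  then obtain i where i: "i \<notin> E" "g1 < i" "i < g2" by blast
  obtain i0 where "i0 \<notin> E" "g1 < i0" "i0 \<le> i" "Cgreedy p E D (i0 - 1) = Spi p i0 - D"
    using first_missing_after_gap[OF adm gap1 i(1,2)] .
  then show ?thesis using that[of i0] i(3) by simp
qed

text \<open>Moving a late job into an idle period of the earlier schedule: the earlier jobs keep their
  completion times and the late jobs do not finish later.\<close>
lemma insert_missing_improves:
  assumes adm: "admissible E D" and i: "i \<notin> E" "1 \<le> i" "Cgreedy p E D (i - 1) = Spi p i - D"
    and e: "e \<in> E" "i < e"
  shows "admissible (insert i E) D" "cost_bound (insert i E) D < cost_bound E D"
proof -
  have "e \<le> n" using admissible_mem[OF adm e(1)] by simp
  then have "i \<le> n" using e(2) by simp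
  then have pi: "0 < w i" "i \<in> late E" using pos_w i(1,2) unfolding late_def by auto
  have same: "Cgreedy p (insert i E) D j = Cgreedy p E D j" if "j \<in> E" for j
    using Cgreedy_insert_mem[OF i(1,2) _ that] i(3) admissible_mem[OF adm that] by simp
  have at_i: "Cgreedy p (insert i E) D i = Cpi p i - D" using Cgreedy_insert_at[OF i(1,2)] i(3) by simp
  have "Cpi p i - D \<le> Cgreedy p E D e"
    using Cgreedy_ge_Cpi_minus[OF e(1), of p D] admissible_mem[OF adm e(1)] Cpi_mono[of i e p] e(2)
    by simp
  also have "\<dots> \<le> Cgreedy p E D n" using Cgreedy_mono[OF \<open>e \<le> n\<close>] .
  finally have at_n: "Cgreedy p (insert i E) D n = Cgreedy p E D n"
    using Cgreedy_insert[OF i(1,2), of p D n] i(3) \<open>i \<le> n\<close> by simp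
  have late_insert: "late E = insert i (late (insert i E))" "i \<notin> late (insert i E)"
    "late (insert i E) \<subseteq> late E"
    using pi(2) unfolding late_def by auto
  have "insert i E \<subseteq> {1..n}" using adm \<open>i \<le> n\<close> i(2) unfolding admissible_def by auto
  moreover have "\<forall>j\<in>late (insert i E). real_of_int T2 - Spi p j \<le> D"
    using adm late_insert(3) unfolding admissible_def by blast
  ultimately show "admissible (insert i E) D" using adm at_n unfolding admissible_def by simp
  have "Cpi p i - D \<le> real_of_int T1"
    using at_i at_n Cgreedy_mono[OF \<open>i \<le> n\<close>, of p "insert i E" D] adm unfolding admissible_def by simp
  then have "real (w i) * (Cpi p i - D) < real (w i) * Clate E i"
    using T2_less_Clate[OF pi(2)] T1_T2 pi(1) by simp
  moreover have "(\<Sum>j\<in>insert i E. real (w j) * Cgreedy p (insert i E) D j)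
      = real (w i) * (Cpi p i - D) + (\<Sum>j\<in>E. real (w j) * Cgreedy p E D j)"
    using admissible_finite[OF adm] i(1) at_i same by simp
  moreover have "Clate (insert i E) j \<le> Clate E j" for j
    unfolding Clate_def using late_insert(3) by (intro add_left_mono sum_mono2) (auto simp: late_def)
  then have "(\<Sum>j\<in>late (insert i E). real (w j) * Clate (insert i E) j)
      \<le> (\<Sum>j\<in>late (insert i E). real (w j) * Clate E j)"
    by (simp add: sum_mono mult_left_mono)
  moreover have "(\<Sum>j\<in>late E. real (w j) * Clate E j)
      = real (w i) * Clate E i + (\<Sum>j\<in>late (insert i E). real (w j) * Clate E j)"
    unfolding late_insert(1) using late_insert(2) by (simp add: late_def)
  ultimately show "cost_bound (insert i E) D < cost_bound E D" unfolding cost_bound_def by simp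
qed

lemma cost_minimal_gap_unique:
  assumes min: "cost_minimal E D" and "starts_after_gap E D g" "starts_after_gap E D g'"
  shows "g = g'"
proof -
  have adm: "admissible E D" using min unfolding cost_minimal_def by blast
  have False if gap1: "starts_after_gap E D g1" and gap2: "starts_after_gap E D g2"
    and "g1 < g2" for g1 g2
  proof -
    obtain i where i: "i \<notin> E" "g1 < i" "i < g2" "Cgreedy p E D (i - 1) = Spi p i - D"
      using missing_between_gaps[OF adm gap1 gap2 \<open>g1 < g2\<close>] .
    have "g2 \<in> E" using gap2 unfolding starts_after_gap_def by simp
    then have "admissible (insert i E) D" "cost_bound (insert i E) D < cost_bound E D"
      using insert_missing_improves[OF adm i(1) _ i(4) _ i(3)] i(2) by simp_all
    then show False using min unfolding cost_minimal_def by fastforce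
  qed
  then show ?thesis using assms(2,3) by (meson linorder_neqE_nat)
qed

lemma canonical_mono_early:
  assumes adm: "admissible E D" and "i \<in> E" "j \<in> E" "i \<le> j"
  shows "canonical E D i \<le> canonical E D j"
proof (cases "i = j")
  case False
  then have "Cs p (canonical E D) i \<le> canonical E D j"
    using canonical_early_order[OF adm assms(2,3)] assms(4) by simp
  then show ?thesis unfolding Cs_def by simp
qed simp

lemma free_before_start:
  assumes adm: "admissible E D" and g: "g \<in> E"
  shows "free_int E p (canonical E D) (Cgreedy p E D (g - 1)) (canonical E D g)"
  unfolding free_int_def
proof
  fix x assume x: "x \<in> E"
  show "Cs p (canonical E D) x \<le> Cgreedy p E D (g - 1) \<or> canonical E D g \<le> canonical E D x"
  proof (cases "x < g")
    case True
    then show ?thesis using Cs_canonical_early[OF x] Cgreedy_mono[of x "g - 1" p E D] by simp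
  qed (use canonical_mono_early[OF adm g x] in simp)
qed

lemma Cgreedy_pred_le:
  assumes adm: "admissible E D" and "j0 \<in> E" "0 \<le> a" and below: "\<forall>x\<in>E. x < j0 \<longrightarrow> Cgreedy p E D x \<le> a"
  shows "Cgreedy p E D (j0 - 1) \<le> a"
proof -
  have "1 \<le> j0" using admissible_mem[OF adm assms(2)] by simp
  then show ?thesis using Cgreedy_last[of p E D "j0 - 1"] below \<open>0 \<le> a\<close> by fastforce
qed

lemma canonical_ge_start_iff:
  assumes adm: "admissible E D" and g: "g \<in> E" and before: "\<forall>x\<in>E. x < g \<longrightarrow> Cgreedy p E D x \<le> a"
    and "a < b" "b \<le> canonical E D g" and x: "x \<in> E"
  shows "b \<le> canonical E D x \<longleftrightarrow> g \<le> x"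
proof
  assume "b \<le> canonical E D x"
  show "g \<le> x"
  proof (rule ccontr)
    assume "\<not> g \<le> x"
    then have "Cgreedy p E D x \<le> a" using before x by simp
    moreover have "canonical E D x \<le> Cgreedy p E D x" unfolding canonical_def using x by simp
    ultimately show False using \<open>b \<le> canonical E D x\<close> \<open>a < b\<close> by simp
  qed
next
  assume "g \<le> x"
  then show "b \<le> canonical E D x" using canonical_mono_early[OF adm g x] assms(5) by simp
qed

lemma idle_period_canonical:
  assumes adm: "admissible E D" and idle: "idle_period E p (canonical E D) a b"
  obtains g where "starts_after_gap E D g" "a = Cgreedy p E D (g - 1)" "b = Spi p g - D"
    "\<forall>j\<in>E. b \<le> canonical E D j \<longleftrightarrow> g \<le> j"
proof -
  let ?M = "Max (Cs p (canonical E D) ` E)"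
  have "E \<noteq> {}" and ab: "0 \<le> a" "a < b" and "b \<le> ?M" and free: "free_int E p (canonical E D) a b"
    and maximal: "\<And>a' b'. a' \<le> a \<Longrightarrow> b \<le> b' \<Longrightarrow> 0 \<le> a' \<Longrightarrow> b' \<le> ?M \<Longrightarrow>
       free_int E p (canonical E D) a' b' \<Longrightarrow> a' = a \<and> b' = b"
    using idle unfolding idle_period_def by blast+
  have "finite E" using admissible_finite[OF adm] .
  then have "?M \<in> Cs p (canonical E D) ` E" using \<open>E \<noteq> {}\<close> by (intro Max_in) auto
  then obtain j where "j \<in> E" "Cs p (canonical E D) j = ?M" by auto
  then have "j \<in> E \<and> a < Cgreedy p E D j" using \<open>b \<le> ?M\<close> ab Cs_canonical_early by simp
  define g where "g = (LEAST x. x \<in> E \<and> a < Cgreedy p E D x)"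
  have g: "g \<in> E" "a < Cgreedy p E D g"
    using LeastI[of "\<lambda>x. x \<in> E \<and> a < Cgreedy p E D x" j] \<open>j \<in> E \<and> _\<close> unfolding g_def by auto
  have "1 \<le> g" using admissible_mem[OF adm g(1)] by simp
  have before: "\<forall>x\<in>E. x < g \<longrightarrow> Cgreedy p E D x \<le> a"
  proof (intro ballI impI)
    fix x assume "x \<in> E" "x < g"
    then show "Cgreedy p E D x \<le> a"
      using not_less_Least[of x "\<lambda>x. x \<in> E \<and> a < Cgreedy p E D x"] unfolding g_def by auto
  qed
  then have pred: "Cgreedy p E D (g - 1) \<le> a" using Cgreedy_pred_le[OF adm g(1) ab(1)] by blast
  have "\<not> Cs p (canonical E D) g \<le> a" using g(2) Cs_canonical_early[OF g(1)] by simp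
  then have "b \<le> canonical E D g" using free g(1) unfolding free_int_def by blast
  moreover have "canonical E D g = max (Cgreedy p E D (g - 1)) (Spi p g - D)"
    using canonical_early[OF g(1) \<open>1 \<le> g\<close>] .
  ultimately have gap_ineq: "Cgreedy p E D (g - 1) < Spi p g - D" using pred ab(2) by linarith
  then have start: "canonical E D g = Spi p g - D"
    using canonical_early[OF g(1) \<open>1 \<le> g\<close>] by simp
  have gap: "starts_after_gap E D g" using g(1) gap_ineq unfolding starts_after_gap_def by simp
  have "canonical E D g \<le> ?M"
    using Max_ge[OF finite_imageI[OF \<open>finite E\<close>], of "Cs p (canonical E D) g"] g(1)
    unfolding Cs_def by force
  then have "Cgreedy p E D (g - 1) = a \<and> canonical E D g = b"
    using maximal[OF pred \<open>b \<le> canonical E D g\<close> Cgreedy_nonneg _ free_before_start[OF adm g(1)]]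
    by blast
  moreover have "\<forall>x\<in>E. b \<le> canonical E D x \<longleftrightarrow> g \<le> x"
    using canonical_ge_start_iff[OF adm g(1) before ab(2) \<open>b \<le> canonical E D g\<close>] by blast
  ultimately show ?thesis using that gap start by auto
qed

lemma canonical_late_le:
  assumes "j \<in> late E" "real_of_int T2 \<le> a" and before: "\<forall>x\<in>late E. x < j \<longrightarrow> Clate E x \<le> a"
  shows "canonical E D j \<le> a"
proof (cases "{x\<in>late E. x < j} = {}")
  case True
  show ?thesis unfolding canonical_late[OF assms(1)] True using assms(2) by simp
next
  case False
  define i where "i = Max {x\<in>late E. x < j}"
  have fin: "finite {x\<in>late E. x < j}" unfolding late_def by simp
  then have i: "i \<in> late E" "i < j" using Max_in[OF fin False] unfolding i_def by auto
  have "x \<le> i" if "x \<in> late E" "x < j" for x using Max_ge[OF fin] that unfolding i_def by simp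
  then have prefix: "{x\<in>late E. x \<le> i} = {x\<in>late E. x < j}" using i(2) by fastforce
  have "canonical E D j = Clate E i" unfolding canonical_late[OF assms(1)] Clate_def prefix ..
  then show ?thesis using before i by simp
qed

lemma no_idle_late: "admissible E D \<Longrightarrow> \<not> idles_after (late E) p (canonical E D) (real_of_int T2)"
proof
  assume "idles_after (late E) p (canonical E D) (real_of_int T2)"
  then obtain a b where ab: "real_of_int T2 \<le> a" "a < b" "b \<le> Max (Cs p (canonical E D) ` late E)"
    and free: "free_int (late E) p (canonical E D) a b" and "late E \<noteq> {}"
    unfolding idles_after_def by blast
  have "finite (late E)" unfolding late_def by simp
  then have "Max (Cs p (canonical E D) ` late E) \<in> Cs p (canonical E D) ` late E"
    using \<open>late E \<noteq> {}\<close> by (intro Max_in) auto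
  then obtain j where "j \<in> late E" "Cs p (canonical E D) j = Max (Cs p (canonical E D) ` late E)"
    by auto
  then have "j \<in> late E \<and> a < Clate E j" using ab Cs_canonical_late by simp
  define j0 where "j0 = (LEAST x. x \<in> late E \<and> a < Clate E x)"
  have j0: "j0 \<in> late E" "a < Clate E j0"
    using LeastI[of "\<lambda>x. x \<in> late E \<and> a < Clate E x" j] \<open>j \<in> late E \<and> _\<close> unfolding j0_def by auto
  have "\<forall>x\<in>late E. x < j0 \<longrightarrow> Clate E x \<le> a"
  proof (intro ballI impI)
    fix x assume "x \<in> late E" "x < j0"
    then show "Clate E x \<le> a"
      using not_less_Least[of x "\<lambda>x. x \<in> late E \<and> a < Clate E x"] unfolding j0_def by auto
  qed
  then have "canonical E D j0 \<le> a" using canonical_late_le[OF j0(1) ab(1)] by blast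
  moreover have "Cs p (canonical E D) j0 \<le> a \<or> b \<le> canonical E D j0"
    using free j0(1) unfolding free_int_def by blast
  ultimately show False using j0 Cs_canonical_late[OF j0(1)] ab(2) by simp
qed

lemma first_late_max_deviation:
  assumes adm: "admissible E D" and j: "j \<in> late E" and i: "i \<in> late E"
    and first: "\<forall>i\<in>late E. canonical E D j \<le> canonical E D i"
  shows "dev p (canonical E D) i \<le> dev p (canonical E D) j"
proof -
  have "j \<le> i"
  proof (rule ccontr)
    assume "\<not> j \<le> i"
    then have "Cs p (canonical E D) i \<le> canonical E D j" using canonical_late_order[OF i j] by simp
    moreover have "0 < p i" using pos_p i unfolding late_def by auto
    ultimately have "canonical E D i < canonical E D j" unfolding Cs_def by simp
    then show False using first i by (simp add: not_le[symmetric])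
  qed
  have dev_late: "dev p (canonical E D) x = real_of_int T2 - (\<Sum>l\<in>{l\<in>E. l \<le> x}. real (p l))"
    if "x \<in> late E" for x
    using Clate_deviation(1)[OF adm that] Clate_minus_Cpi[OF adm that] Cs_canonical_late[OF that]
    unfolding dev_def by simp
  have "(\<Sum>l\<in>{l\<in>E. l \<le> j}. real (p l)) \<le> (\<Sum>l\<in>{l\<in>E. l \<le> i}. real (p l))"
    using \<open>j \<le> i\<close> by (intro sum_mono2) auto
  then show ?thesis using dev_late[OF i] dev_late[OF j] by simp
qed

lemma Cs_canonical_le_Cpi: "admissible E D \<Longrightarrow> j \<in> E \<Longrightarrow> Cs p (canonical E D) j \<le> Cpi p j"
  using Cs_canonical_early Cgreedy_le_Cpi unfolding admissible_def by simp

lemma idle_period_unique: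
  assumes min: "cost_minimal E D"
    and "idle_period E p (canonical E D) a b" "idle_period E p (canonical E D) a' b'"
  shows "a = a' \<and> b = b'"
proof -
  have adm: "admissible E D" using min unfolding cost_minimal_def by blast
  obtain g where "starts_after_gap E D g" "a = Cgreedy p E D (g - 1)" "b = Spi p g - D"
    using idle_period_canonical[OF adm assms(2)] .
  moreover obtain g' where "starts_after_gap E D g'" "a' = Cgreedy p E D (g' - 1)" "b' = Spi p g' - D"
    using idle_period_canonical[OF adm assms(3)] .
  ultimately show ?thesis using cost_minimal_gap_unique[OF min] by metis
qed

lemma Dmax_canonical_gap:
  assumes adm: "admissible E D" and gap: "starts_after_gap E D g"
  shows "Dmax n p (canonical E D) = D"
proof (rule antisym)
  show "Dmax n p (canonical E D) \<le> D" by (rule Dmax_canonical_le[OF adm])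
  have g: "g \<in> E" "1 \<le> g" "g \<le> n" using starts_after_gap_range[OF adm gap] by auto
  then have "Cgreedy p E D g = Cpi p g - D" using Cgreedy_after_gap[OF adm gap order_refl] by simp
  then have "dev p (canonical E D) g = D"
    using Cs_canonical_early[OF g(1)] adm unfolding dev_def admissible_def by simp
  then show "D \<le> Dmax n p (canonical E D)" using dev_le_Dmax[of g n p "canonical E D"] g by simp
qed

lemma canonical_after_idle:
  assumes min: "cost_minimal E D" and idle: "idle_period E p (canonical E D) a b"
  shows "(\<forall>j\<in>E. canonical E D j \<ge> b \<longrightarrow> Cpi p j - Cs p (canonical E D) j = Dmax n p (canonical E D))
    \<and> (\<forall>x y z. x \<in> E \<and> canonical E D x \<ge> b \<and> z \<in> E \<and> canonical E D z \<ge> b \<and> x \<le> y \<and> y \<le> z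
          \<longrightarrow> y \<in> E \<and> canonical E D y \<ge> b)
    \<and> (\<forall>j\<in>E. canonical E D j = b \<longrightarrow> Spi p j \<ge> real_of_int T2)"
proof -
  have adm: "admissible E D" using min unfolding cost_minimal_def by blast
  obtain g where gap: "starts_after_gap E D g" and b: "b = Spi p g - D"
    and after: "\<forall>j\<in>E. b \<le> canonical E D j \<longleftrightarrow> g \<le> j"
    using idle_period_canonical[OF adm idle] by blast
  have "\<forall>g'. starts_after_gap E D g' \<longrightarrow> g' = g" using cost_minimal_gap_unique[OF min] gap by blast
  note block = after_unique_gap[OF adm gap this]
  have Cs_after: "Cs p (canonical E D) j = Cpi p j - D" if "j \<in> E" "g \<le> j" for j
    using block(2)[OF that] Cs_canonical_early[OF that(1)] by simp
  have "\<forall>j\<in>E. canonical E D j \<ge> b \<longrightarrow> Cpi p j - Cs p (canonical E D) j = Dmax n p (canonical E D)"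
    using after Cs_after Dmax_canonical_gap[OF adm gap] by simp
  moreover have "y \<in> E \<and> canonical E D y \<ge> b"
    if "x \<in> E \<and> canonical E D x \<ge> b \<and> z \<in> E \<and> canonical E D z \<ge> b \<and> x \<le> y \<and> y \<le> z" for x y z
  proof -
    have "g \<le> x" "g \<le> z" using that after by auto
    then have "y \<in> E" "g \<le> y" using block(1)[of z] that by auto
    then show ?thesis using after by blast
  qed
  moreover have "Spi p j \<ge> real_of_int T2" if "j \<in> E" "canonical E D j = b" for j
  proof -
    have "b \<le> canonical E D j" using that(2) by simp
    then have "g \<le> j" using after that(1) by blast
    then have "canonical E D j = Spi p j - D"
      using Cs_after[OF that(1)] Cpi_eq_Spi_plus[of j p] admissible_mem[OF adm that(1)]
      unfolding Cs_def by simp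
    then have "Spi p j = Spi p g" using b that(2) by simp
    then show ?thesis using T2_less_Spi_gap[OF adm gap] by simp
  qed
  ultimately show ?thesis by blast
qed

end

theorem lemma2:
  fixes n :: nat and p w :: "nat \<Rightarrow> nat" and T1 T2 k :: int and \<mu> :: rat
  assumes pos_p: "\<forall>j\<in>{1..n}. p j > 0"
    and pos_w: "\<forall>j\<in>{1..n}. w j > 0"
    and wspt: "\<forall>i\<in>{1..n}. \<forall>j\<in>{1..n}. i \<le> j \<longrightarrow> p i * w j \<le> p j * w i"
    and T1_nonneg: "0 \<le> T1" and T1_T2: "T1 < T2"
    and mu_nonneg: "0 \<le> \<mu>"
    and some_late: "\<exists>j\<in>{1..n}. Cpi p j > real_of_int T1"
    and pmin: "real (Min (p ` {1..n})) \<le> real_of_int T1"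
    and T1_lt_P: "real_of_int T1 < real (\<Sum>j\<in>{1..n}. p j)"
    and j1: "real_of_int T2 - Spi p (LEAST j. j \<in> {1..n} \<and> Cpi p j > real_of_int T1) \<le> real_of_int k"
    and has_feasible: "\<exists>S. feasible n p T1 T2 k S"
  shows "\<exists>S. optimal n p w T1 T2 k \<mu> S
    \<and> (\<forall>j\<in>earlier n p T1 S. Cs p S j \<le> Cpi p j)
    \<and> (\<forall>a b a' b'. idle_period (earlier n p T1 S) p S a b \<and> idle_period (earlier n p T1 S) p S a' b'
          \<longrightarrow> a = a' \<and> b = b')
    \<and> (\<forall>a b. idle_period (earlier n p T1 S) p S a b \<longrightarrow>
          (\<forall>j\<in>earlier n p T1 S. S j \<ge> b \<longrightarrow> Cpi p j - Cs p S j = Dmax n p S)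
        \<and> (\<forall>x y z. x \<in> earlier n p T1 S \<and> S x \<ge> b \<and> z \<in> earlier n p T1 S \<and> S z \<ge> b \<and> x \<le> y \<and> y \<le> z
              \<longrightarrow> y \<in> earlier n p T1 S \<and> S y \<ge> b)
        \<and> (\<forall>j\<in>earlier n p T1 S. S j = b \<longrightarrow> Spi p j \<ge> real_of_int T2))
    \<and> \<not> idles_after (later n p T2 S) p S (real_of_int T2)
    \<and> (\<forall>j\<in>later n p T2 S. (\<forall>i\<in>later n p T2 S. S j \<le> S i) \<longrightarrow>
          (\<forall>i\<in>later n p T2 S. dev p S i \<le> dev p S j))"
proof -
  \<comment> \<open>only \<open>1 \<le> n\<close> is used from \<open>some_late\<close>\<close>
  have "1 \<le> n" using some_late by auto
  then interpret rescheduling n p w T1 T2 k \<mu>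
    using pos_p pos_w wspt T1_nonneg T1_T2 mu_nonneg T1_lt_P by unfold_locales
  obtain S0 where "feasible n p T1 T2 k S0" using has_feasible by blast
  then obtain E D where min: "cost_minimal E D"
    using cost_minimal_exists admissible_earlier by blast
  then have adm: "admissible E D" unfolding cost_minimal_def by blast
  show ?thesis
    by (rule exI[of _ "canonical E D"], unfold earlier_canonical[OF adm] later_canonical[OF adm])
      (use optimal_canonical[OF min] Cs_canonical_le_Cpi[OF adm] idle_period_unique[OF min]
        canonical_after_idle[OF min] no_idle_late[OF adm] first_late_max_deviation[OF adm] in blast)
qed
end
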